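(* Assume $\mathbf J$ is positive definite. Let $\mu$ be a global maximum point of $f$ of homogeneous type $k$, and let $F=\max_{\mathbb{R}^n}f$. Then there exists $\delta_\mu>0$ such that for every $t\in\mathbb{R}^n$, every $\delta\in(0,\delta_\mu]$ and every bounded continuous $\phi:\mathbb{R}^n\to\mathbb{R}$, $$\lim_{N\to\infty}e^{-\sum_l t_lN_l^{1/(2k)}\mu_l}\Big(\prod_{l=1}^nN_l\Big)^{1/(2k)}e^{-NF}\int_{B(\mu,\delta)}\exp\Big(Nf(x)+\sum_{l=1}^nt_lN_l^{1/(2k)}x_l\Big)\phi(x)\,dx=\phi(\mu)\int_{\mathbb{R}^n}\exp\Big(f^{\mu}_{2k}\Big(\frac{x}{\alpha^{1/(2k)}}\Big)+\langle t,x\rangle\Big)dx,$$ where $B(\mu,\delta)$ is the Euclidean ball of center $\mu$ and radius $\delta$, and the integral on the right is finite.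
   Context: Fix $n\ge1$, weights $\alpha_1,\dots,\alpha_n\in(0,1)$ with $\sum_l\alpha_l=1$, a real symmetric $n\times n$ matrix $\mathbf J=(J_{ls})$ with $J_{ll}>0$ (the reduced interaction matrix), and $\mathbf h\in\mathbb{R}^n$; $N_l=\alpha_lN$. Define $f(x)=-\frac12\sum_{l,s=1}^n\alpha_l\alpha_sJ_{ls}x_lx_s+\sum_{l=1}^n\alpha_l\ln\cosh\big(\sum_{s=1}^n\alpha_sJ_{ls}x_s+h_l\big)$ on $\mathbb{R}^n$. Homogeneous type: for a global maximum point $\mu$ of $f$, write the Taylor expansion $f(\mu+y)=f(\mu)+\sum_{j\ge1}T_j(y)$ with $T_j$ homogeneous polynomials of degree $j$; $\mu$ has homogeneous type $k$ (a positive integer) if $T_j\equiv0$ for $1\le j\le 2k-1$ and $T_{2k}(y)<0$ for all $y\neq0$; then set $f^{\mu}_{2k}=T_{2k}$. Vector notation: for $x\in\mathbb{R}^n$ and $\gamma\in\mathbb{R}$, $x/\alpha^{\gamma}=(x_1/\alpha_1^{\gamma},\dots,x_n/\alpha_n^{\gamma})$. *)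

theory Defs
  imports "HOL-Analysis.Analysis"
begin

definition curie_f :: "real^'n \<Rightarrow> real^'n^'n \<Rightarrow> real^'n \<Rightarrow> real^'n \<Rightarrow> real" where
  "curie_f \<alpha> J h x =
     - (1/2) * (\<Sum>l\<in>UNIV. \<Sum>s\<in>UNIV. \<alpha>$l * \<alpha>$s * J$l$s * x$l * x$s)
     + (\<Sum>l\<in>UNIV. \<alpha>$l * ln (cosh ((\<Sum>s\<in>UNIV. \<alpha>$s * J$l$s * x$s) + h$l)))"

definition taylor_term :: "(real^'n \<Rightarrow> real) \<Rightarrow> real^'n \<Rightarrow> nat \<Rightarrow> real^'n \<Rightarrow> real" where
  "taylor_term g mu j y = ((deriv ^^ j) (\<lambda>s. g (mu + s *\<^sub>R y)) 0) / fact j"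

definition homogeneous_type :: "(real^'n \<Rightarrow> real) \<Rightarrow> real^'n \<Rightarrow> nat \<Rightarrow> bool" where
  "homogeneous_type g mu k \<longleftrightarrow> k \<ge> 1 \<and>
     (\<forall>j. 1 \<le> j \<and> j \<le> 2*k - 1 \<longrightarrow> (\<forall>y. taylor_term g mu j y = 0)) \<and>
     (\<forall>y. y \<noteq> 0 \<longrightarrow> taylor_term g mu (2*k) y < 0)"

definition pos_def_matrix :: "real^'n^'n \<Rightarrow> bool" where
  "pos_def_matrix J \<longleftrightarrow> (\<forall>x. x \<noteq> 0 \<longrightarrow> x \<bullet> (J *v x) > 0)"

end

theory Submission
  imports Defs "HOL-Computational_Algebra.Polynomial"
begin

text \<open>Laplace's method. Near \<open>\<mu>\<close> we have \<open>f (\<mu> + y) = f \<mu> + f\<^sup>\<mu>\<^sub>2\<^sub>k y + O(|y|\<^bsup>2k+1\<^esup>)\<close>, the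
  remainder being controlled because every derivative of \<open>ln \<circ> cosh\<close> of positive order is
  bounded. As \<open>f\<^sup>\<mu>\<^sub>2\<^sub>k\<close> is continuous, homogeneous of degree \<open>2k\<close> and negative away from \<open>0\<close>, it is
  at most \<open>-c |y|\<^bsup>2k\<^esup>\<close>, hence \<open>f (\<mu> + y) - f \<mu> \<le> -c/2 |y|\<^bsup>2k\<^esup>\<close> on a small ball.
  After the substitution \<open>x\<^sub>l = \<mu>\<^sub>l + u\<^sub>l / N\<^sub>l\<^bsup>1/(2k)\<^esup>\<close> the normalised integral becomes
  \<open>\<integral> exp (N (f x - f \<mu>) + \<langle>t, u\<rangle>) \<phi> x du\<close> over the rescaled ball. By homogeneity the exponent tends
  pointwise to \<open>f\<^sup>\<mu>\<^sub>2\<^sub>k (u / \<alpha>\<^bsup>1/(2k)\<^esup>) + \<langle>t, u\<rangle>\<close>, and the integrand is dominated by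
  \<open>B exp (-c/2 |u|\<^bsup>2k\<^esup> + |t| |u|)\<close>, so dominated convergence gives the limit.\<close>

section \<open>Derivatives of ln cosh\<close>

text \<open>Since \<open>tanh' = 1 - tanh\<^sup>2\<close>, every derivative of \<open>ln \<circ> cosh\<close> of positive order is a
  polynomial in \<open>tanh\<close>, hence bounded.\<close>

fun tanh_deriv_poly :: "nat \<Rightarrow> real poly" where
  "tanh_deriv_poly 0 = [:0, 1:]"
| "tanh_deriv_poly (Suc j) = pderiv (tanh_deriv_poly j) * [:1, 0, -1:]"

definition ln_cosh_deriv :: "nat \<Rightarrow> real \<Rightarrow> real" where
  "ln_cosh_deriv j x = (if j = 0 then ln (cosh x) else poly (tanh_deriv_poly (j - 1)) (tanh x))"

lemma ln_cosh_deriv_0 [simp]: "ln_cosh_deriv 0 x = ln (cosh x)"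
  by (simp add: ln_cosh_deriv_def)

lemma has_real_derivative_ln_cosh_deriv:
  "(ln_cosh_deriv j has_real_derivative ln_cosh_deriv (Suc j) x) (at x)"
proof (cases j)
  case 0
  have "((\<lambda>x. ln (cosh x)) has_real_derivative (1 / cosh x * sinh x)) (at x)"
    by (auto intro!: derivative_eq_intros simp: cosh_real_pos)
  then show ?thesis
    using 0 by (simp add: ln_cosh_deriv_def[abs_def] tanh_def)
next
  case (Suc i)
  have "(tanh has_real_derivative 1 - tanh x ^ 2) (at x)"
    using has_field_derivative_tanh[OF _ DERIV_ident, of x]
    by (simp add: cosh_real_pos[THEN less_imp_neq, symmetric])
  then have "((\<lambda>x. poly (tanh_deriv_poly i) (tanh x)) has_real_derivative
               poly (pderiv (tanh_deriv_poly i)) (tanh x) * (1 - tanh x ^ 2)) (at x)"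
    by (rule DERIV_chain2[OF poly_DERIV])
  then show ?thesis
    using Suc by (simp add: ln_cosh_deriv_def[abs_def] power2_eq_square algebra_simps)
qed

lemma ln_cosh_deriv_bounded: "\<exists>M. \<forall>x. \<bar>ln_cosh_deriv (Suc j) x\<bar> \<le> M"
proof -
  have "compact (poly (tanh_deriv_poly j) ` {-1..1})"
    by (intro compact_continuous_image continuous_intros) auto
  then obtain M where M: "\<And>z. z \<in> poly (tanh_deriv_poly j) ` {-1..1} \<Longrightarrow> \<bar>z\<bar> \<le> M"
    using compact_imp_bounded bounded_iff real_norm_def by metis
  have "\<bar>ln_cosh_deriv (Suc j) x\<bar> \<le> M" for x
    using M[of "poly (tanh_deriv_poly j) (tanh x)"] tanh_real_bounds[of x]
    by (auto simp: ln_cosh_deriv_def)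
  then show ?thesis by blast
qed

lemma ln_cosh_Taylor_remainder:
  obtains M where "0 \<le> M"
    and "\<And>a x. \<bar>ln (cosh (a + x)) - (\<Sum>m<Suc n. ln_cosh_deriv m a / fact m * x ^ m)\<bar>
                  \<le> M * \<bar>x\<bar> ^ Suc n"
proof -
  have shifted_deriv:
    "\<forall>m y. ((\<lambda>y. ln_cosh_deriv m (a + y)) has_real_derivative ln_cosh_deriv (Suc m) (a + y)) (at y)"
    for a
  proof (intro allI)
    fix m y
    have "((\<lambda>y. a + y) has_real_derivative 1) (at y)"
      by (auto intro!: derivative_eq_intros)
    from DERIV_chain2[OF has_real_derivative_ln_cosh_deriv this]
    show "((\<lambda>y. ln_cosh_deriv m (a + y)) has_real_derivative ln_cosh_deriv (Suc m) (a + y)) (at y)"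
      by simp
  qed
  obtain M where M: "\<And>x. \<bar>ln_cosh_deriv (Suc n) x\<bar> \<le> M"
    using ln_cosh_deriv_bounded by blast
  have "\<bar>ln (cosh (a + x)) - (\<Sum>m<Suc n. ln_cosh_deriv m a / fact m * x ^ m)\<bar> \<le> M * \<bar>x\<bar> ^ Suc n"
    for a x
  proof -
    obtain t where "ln (cosh (a + x)) = (\<Sum>m<Suc n. ln_cosh_deriv m a / fact m * x ^ m)
                      + ln_cosh_deriv (Suc n) (a + t) / fact (Suc n) * x ^ Suc n"
      using Maclaurin_all_le[OF _ shifted_deriv, of a "\<lambda>y. ln (cosh (a + y))" x "Suc n"]
      by (auto simp only: add_0_right ln_cosh_deriv_0)
    then have remainder: "ln (cosh (a + x)) - (\<Sum>m<Suc n. ln_cosh_deriv m a / fact m * x ^ m)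
                            = ln_cosh_deriv (Suc n) (a + t) / fact (Suc n) * x ^ Suc n"
      by linarith
    have "\<bar>D / fact (Suc n)\<bar> \<le> \<bar>D\<bar>" for D :: real
      by (metis abs_div_pos abs_eq_iff' abs_ge_self div_by_1 divide_mono fact_ge_1 fact_gt_zero
          zero_less_one)
    then have "\<bar>ln_cosh_deriv (Suc n) (a + t) / fact (Suc n)\<bar> \<le> M"
      using M[of "a + t"] by (rule order_trans)
    then have "\<bar>ln_cosh_deriv (Suc n) (a + t) / fact (Suc n) * x ^ Suc n\<bar> \<le> M * \<bar>x\<bar> ^ Suc n"
      unfolding abs_mult power_abs by (rule mult_right_mono) simp
    then show ?thesis
      unfolding remainder .
  qed
  moreover have "0 \<le> M"
    using M[of 0] by linarith
  ultimately show ?thesis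
    using that by blast
qed

section \<open>The Taylor expansion of f\<close>

lemma funpow_deriv_family:
  assumes "\<And>j s. (d j has_real_derivative d (Suc j) s) (at s)"
  shows "(deriv ^^ j) (d 0) = d j"
proof (induction j)
  case (Suc j)
  have "deriv (d j) = d (Suc j)"
    using assms DERIV_imp_deriv by blast
  then show ?case
    by (simp add: Suc.IH)
qed simp

definition coupling :: "real^'n \<Rightarrow> real^'n^'n \<Rightarrow> real^'n \<Rightarrow> 'n \<Rightarrow> real" where
  "coupling \<alpha> J x l = (\<Sum>s\<in>UNIV. \<alpha>$s * J$l$s * x$s)"

definition energy :: "real^'n \<Rightarrow> real^'n^'n \<Rightarrow> real^'n \<Rightarrow> real" where
  "energy \<alpha> J x = (\<Sum>l\<in>UNIV. \<Sum>s\<in>UNIV. \<alpha>$l * \<alpha>$s * J$l$s * x$l * x$s)"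

definition cross_energy :: "real^'n \<Rightarrow> real^'n^'n \<Rightarrow> real^'n \<Rightarrow> real^'n \<Rightarrow> real" where
  "cross_energy \<alpha> J x y = (\<Sum>l\<in>UNIV. \<Sum>s\<in>UNIV. \<alpha>$l * \<alpha>$s * J$l$s * (x$l * y$s + y$l * x$s))"

definition curie_line_deriv ::
    "real^'n \<Rightarrow> real^'n^'n \<Rightarrow> real^'n \<Rightarrow> real^'n \<Rightarrow> real^'n \<Rightarrow> nat \<Rightarrow> real \<Rightarrow> real" where
  "curie_line_deriv \<alpha> J h mu y j s =
     (if j = 0 then -1/2 * (energy \<alpha> J mu + s * cross_energy \<alpha> J mu y + s^2 * energy \<alpha> J y)
      else if j = 1 then -1/2 * (cross_energy \<alpha> J mu y + 2 * s * energy \<alpha> J y)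
      else if j = 2 then - energy \<alpha> J y else 0)
     + (\<Sum>l\<in>UNIV. \<alpha>$l * coupling \<alpha> J y l ^ j
                   * ln_cosh_deriv j (coupling \<alpha> J mu l + h$l + s * coupling \<alpha> J y l))"

lemma curie_f_line: "curie_f \<alpha> J h (mu + s *\<^sub>R y) = curie_line_deriv \<alpha> J h mu y 0 s"
proof -
  have field: "(\<Sum>s'\<in>UNIV. \<alpha>$s' * J$l$s' * (mu + s *\<^sub>R y)$s') + h$l
          = coupling \<alpha> J mu l + h$l + s * coupling \<alpha> J y l" for l
    by (simp add: coupling_def sum.distrib sum_distrib_left algebra_simps)
  have quadratic: "(\<Sum>l\<in>UNIV. \<Sum>s'\<in>UNIV. \<alpha>$l * \<alpha>$s' * J$l$s' * (mu + s *\<^sub>R y)$l * (mu + s *\<^sub>R y)$s')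
      = energy \<alpha> J mu + s * cross_energy \<alpha> J mu y + s^2 * energy \<alpha> J y"
    by (simp add: energy_def cross_energy_def sum.distrib sum_distrib_left algebra_simps power2_eq_square)
  show ?thesis
    unfolding curie_f_def field quadratic curie_line_deriv_def by simp
qed

lemma has_real_derivative_curie_line_deriv:
  "(curie_line_deriv \<alpha> J h mu y j has_real_derivative curie_line_deriv \<alpha> J h mu y (Suc j) s) (at s)"
proof -
  let ?a = "\<lambda>l. coupling \<alpha> J mu l + h$l" and ?b = "coupling \<alpha> J y"
  have "((\<lambda>s. \<Sum>l\<in>UNIV. \<alpha>$l * ?b l ^ j * ln_cosh_deriv j (?a l + s * ?b l)) has_real_derivative
          (\<Sum>l\<in>UNIV. \<alpha>$l * ?b l ^ Suc j * ln_cosh_deriv (Suc j) (?a l + s * ?b l))) (at s)"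
  proof (rule DERIV_sum)
    fix l
    have "((\<lambda>s. ?a l + s * ?b l) has_real_derivative ?b l) (at s)"
      by (auto intro!: derivative_eq_intros)
    from DERIV_cmult[OF DERIV_chain2[OF has_real_derivative_ln_cosh_deriv this], of "\<alpha>$l * ?b l ^ j"]
    show "((\<lambda>s. \<alpha>$l * ?b l ^ j * ln_cosh_deriv j (?a l + s * ?b l)) has_real_derivative
            \<alpha>$l * ?b l ^ Suc j * ln_cosh_deriv (Suc j) (?a l + s * ?b l)) (at s)"
      by (simp add: algebra_simps)
  qed
  moreover have "((\<lambda>s. if j = 0 then -1/2 * (energy \<alpha> J mu + s * cross_energy \<alpha> J mu y + s^2 * energy \<alpha> J y)
      else if j = 1 then -1/2 * (cross_energy \<alpha> J mu y + 2 * s * energy \<alpha> J y)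
      else if j = 2 then - energy \<alpha> J y else 0) has_real_derivative
      (if Suc j = 1 then -1/2 * (cross_energy \<alpha> J mu y + 2 * s * energy \<alpha> J y)
      else if Suc j = 2 then - energy \<alpha> J y else 0)) (at s)"
    by (cases "j = 0 \<or> j = 1 \<or> j = 2") (auto intro!: derivative_eq_intros simp: algebra_simps)
  ultimately show ?thesis
    unfolding curie_line_deriv_def[abs_def] by (auto dest: DERIV_add)
qed

lemma taylor_term_curie_f:
  "taylor_term (curie_f \<alpha> J h) mu j y =
     (if j = 0 then -1/2 * energy \<alpha> J mu else if j = 1 then -1/2 * cross_energy \<alpha> J mu y
      else if j = 2 then - energy \<alpha> J y else 0) / fact j
     + (\<Sum>l\<in>UNIV. \<alpha>$l * (ln_cosh_deriv j (coupling \<alpha> J mu l + h$l) / fact j * coupling \<alpha> J y l ^ j))"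
proof -
  have "(\<lambda>s. curie_f \<alpha> J h (mu + s *\<^sub>R y)) = curie_line_deriv \<alpha> J h mu y 0"
    by (simp add: fun_eq_iff curie_f_line)
  then have "taylor_term (curie_f \<alpha> J h) mu j y = curie_line_deriv \<alpha> J h mu y j 0 / fact j"
    unfolding taylor_term_def
    using funpow_deriv_family[of "curie_line_deriv \<alpha> J h mu y", OF has_real_derivative_curie_line_deriv]
    by simp
  then show ?thesis
    by (simp add: curie_line_deriv_def add_divide_distrib sum_divide_distrib mult_ac)
qed

lemma taylor_term_curie_f_even:
  assumes "1 \<le> k"
  shows "taylor_term (curie_f \<alpha> J h) mu (2*k) y =
           (if k = 1 then - energy \<alpha> J y / 2 else 0)
           + (\<Sum>l\<in>UNIV. \<alpha>$l * (ln_cosh_deriv (2*k) (coupling \<alpha> J mu l + h$l) / fact (2*k)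
                                 * coupling \<alpha> J y l ^ (2*k)))"
  using assms unfolding taylor_term_curie_f by auto

lemma taylor_term_curie_f_homogeneous:
  assumes "1 \<le> k"
  shows "taylor_term (curie_f \<alpha> J h) mu (2*k) (c *\<^sub>R y) = c^(2*k) * taylor_term (curie_f \<alpha> J h) mu (2*k) y"
proof -
  have "coupling \<alpha> J (c *\<^sub>R y) l = c * coupling \<alpha> J y l" for l
    by (simp add: coupling_def sum_distrib_left mult_ac)
  moreover have "energy \<alpha> J (c *\<^sub>R y) = c^2 * energy \<alpha> J y"
    by (simp add: energy_def sum_distrib_left mult_ac power2_eq_square)
  ultimately show ?thesis
    unfolding taylor_term_curie_f_even[OF assms]
    by (auto simp: sum_distrib_left power_mult_distrib mult_ac distrib_left)
qed

lemma continuous_on_taylor_term_curie_f: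
  assumes "1 \<le> k"
  shows "continuous_on UNIV (taylor_term (curie_f \<alpha> J h) mu (2*k))"
  unfolding taylor_term_curie_f_even[OF assms, abs_def] energy_def coupling_def
  by (cases "k = 1") (auto intro!: continuous_intros)

lemma continuous_on_curie_f: "continuous_on UNIV (curie_f \<alpha> J h)"
  unfolding curie_f_def[abs_def]
  by (intro continuous_intros) (auto simp: cosh_real_pos less_imp_neq[symmetric])

lemma sum_taylor_term_curie_f:
  assumes "2 \<le> m"
  shows "(\<Sum>i<m. taylor_term (curie_f \<alpha> J h) mu (Suc i) y) =
           -1/2 * cross_energy \<alpha> J mu y - 1/2 * energy \<alpha> J y
           + (\<Sum>l\<in>UNIV. \<alpha>$l * (\<Sum>i<m. ln_cosh_deriv (Suc i) (coupling \<alpha> J mu l + h$l) / fact (Suc i)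
                                     * coupling \<alpha> J y l ^ Suc i))"
proof -
  let ?q = "\<lambda>j::nat. (if j = 0 then -1/2 * energy \<alpha> J mu else if j = 1 then -1/2 * cross_energy \<alpha> J mu y
                      else if j = 2 then - energy \<alpha> J y else 0) / fact j"
  obtain m' where m': "m = Suc (Suc m')"
    using assms by (metis add_2_eq_Suc le_Suc_ex)
  have "(\<Sum>i<m. ?q (Suc i)) = ?q 1 + ?q 2 + (\<Sum>i<m'. ?q (Suc (Suc (Suc i))))"
    unfolding m' sum.lessThan_Suc_shift by simp
  then have q: "(\<Sum>i<m. ?q (Suc i)) = -1/2 * cross_energy \<alpha> J mu y - 1/2 * energy \<alpha> J y"
    by simp
  show ?thesis
    unfolding taylor_term_curie_f sum.distrib q
    by (subst sum.swap) (simp add: sum_distrib_left)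
qed

lemma abs_coupling_le: "\<bar>coupling \<alpha> J y l\<bar> \<le> (\<Sum>s\<in>UNIV. \<bar>\<alpha>$s * J$l$s\<bar>) * norm y"
proof -
  have "\<bar>coupling \<alpha> J y l\<bar> \<le> (\<Sum>s\<in>UNIV. \<bar>\<alpha>$s * J$l$s\<bar> * \<bar>y$s\<bar>)"
    unfolding coupling_def by (rule order_trans[OF sum_abs]) (simp add: abs_mult)
  also have "\<dots> \<le> (\<Sum>s\<in>UNIV. \<bar>\<alpha>$s * J$l$s\<bar> * norm y)"
    by (intro sum_mono mult_left_mono component_le_norm_cart) simp
  finally show ?thesis
    by (simp add: sum_distrib_right)
qed

lemma curie_f_Taylor_remainder:
  assumes "2 \<le> m"
  obtains C where "\<And>y. \<bar>curie_f \<alpha> J h (mu + y) - curie_f \<alpha> J h mu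
                          - (\<Sum>i<m. taylor_term (curie_f \<alpha> J h) mu (Suc i) y)\<bar> \<le> C * norm y ^ Suc m"
proof -
  let ?g = "curie_f \<alpha> J h"
  let ?a = "\<lambda>l. coupling \<alpha> J mu l + h$l" and ?b = "coupling \<alpha> J"
  define R where "R y l = ln (cosh (?a l + ?b y l)) - (\<Sum>i<Suc m. ln_cosh_deriv i (?a l) / fact i * ?b y l ^ i)"
    for y l
  obtain M where "0 \<le> M" and "\<And>a x. \<bar>ln (cosh (a + x)) - (\<Sum>i<Suc m. ln_cosh_deriv i a / fact i * x ^ i)\<bar>
                                  \<le> M * \<bar>x\<bar> ^ Suc m"
    using ln_cosh_Taylor_remainder[of m] by blast
  then have M: "0 \<le> M" "\<And>y l. \<bar>R y l\<bar> \<le> M * \<bar>?b y l\<bar> ^ Suc m"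
    unfolding R_def by blast+
  define K where "K l = (\<Sum>s\<in>UNIV. \<bar>\<alpha>$s * J$l$s\<bar>)" for l
  have "\<bar>?g (mu + y) - ?g mu - (\<Sum>i<m. taylor_term ?g mu (Suc i) y)\<bar>
          \<le> (\<Sum>l\<in>UNIV. \<bar>\<alpha>$l\<bar> * M * K l ^ Suc m) * norm y ^ Suc m" for y
  proof -
    have g1: "?g (mu + y) = -1/2 * (energy \<alpha> J mu + cross_energy \<alpha> J mu y + energy \<alpha> J y)
                            + (\<Sum>l\<in>UNIV. \<alpha>$l * ln (cosh (?a l + ?b y l)))"
      using curie_f_line[of \<alpha> J h mu 1 y] by (simp add: curie_line_deriv_def)
    have g0: "?g mu = -1/2 * energy \<alpha> J mu + (\<Sum>l\<in>UNIV. \<alpha>$l * ln (cosh (?a l)))"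
      using curie_f_line[of \<alpha> J h mu 0 y] by (simp add: curie_line_deriv_def)
    have "(\<Sum>l\<in>UNIV. \<alpha>$l * R y l) = (\<Sum>l\<in>UNIV. \<alpha>$l * ln (cosh (?a l + ?b y l)))
            - (\<Sum>l\<in>UNIV. \<alpha>$l * ln (cosh (?a l)))
            - (\<Sum>l\<in>UNIV. \<alpha>$l * (\<Sum>i<m. ln_cosh_deriv (Suc i) (?a l) / fact (Suc i) * ?b y l ^ Suc i))"
      unfolding R_def sum.lessThan_Suc_shift
      by (simp add: right_diff_distrib sum_subtractf distrib_left sum.distrib del: sum.lessThan_Suc)
    then have "?g (mu + y) - ?g mu - (\<Sum>i<m. taylor_term ?g mu (Suc i) y) = (\<Sum>l\<in>UNIV. \<alpha>$l * R y l)"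
      unfolding g1 g0 sum_taylor_term_curie_f[OF assms] by (simp add: algebra_simps)
    also have "\<bar>\<dots>\<bar> \<le> (\<Sum>l\<in>UNIV. \<bar>\<alpha>$l\<bar> * (M * (K l * norm y) ^ Suc m))"
    proof (rule order_trans[OF sum_abs], rule sum_mono)
      fix l
      have "\<bar>R y l\<bar> \<le> M * (K l * norm y) ^ Suc m"
        using M(2)[of y l] mult_left_mono[OF power_mono[OF abs_coupling_le abs_ge_zero] M(1)]
        unfolding K_def by (rule order_trans)
      then show "\<bar>\<alpha>$l * R y l\<bar> \<le> \<bar>\<alpha>$l\<bar> * (M * (K l * norm y) ^ Suc m)"
        by (simp add: abs_mult mult_left_mono)
    qed
    also have "\<dots> = (\<Sum>l\<in>UNIV. \<bar>\<alpha>$l\<bar> * M * K l ^ Suc m) * norm y ^ Suc m"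
      unfolding sum_distrib_right by (simp add: power_mult_distrib mult_ac del: power_Suc)
    finally show ?thesis .
  qed
  then show ?thesis using that by blast
qed

lemma homogeneous_type_sum_taylor_term:
  assumes "homogeneous_type g mu k"
  shows "(\<Sum>i<2*k. taylor_term g mu (Suc i) y) = taylor_term g mu (2*k) y"
proof -
  obtain m where m: "2*k = Suc m"
    using assms by (cases "2*k") (auto simp: homogeneous_type_def)
  have "(\<Sum>i<m. taylor_term g mu (Suc i) y) = 0"
    using assms m by (intro sum.neutral) (auto simp: homogeneous_type_def)
  then show ?thesis
    unfolding m by simp
qed

lemma curie_f_leading_term_remainder:
  assumes "homogeneous_type (curie_f \<alpha> J h) mu k"
  shows "\<exists>C. \<forall>y. \<bar>curie_f \<alpha> J h (mu + y) - curie_f \<alpha> J h mu - taylor_term (curie_f \<alpha> J h) mu (2*k) y\<bar>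
                   \<le> C * norm y ^ Suc (2*k)"
proof -
  have "2 \<le> 2*k"
    using assms by (simp add: homogeneous_type_def)
  then obtain C where "\<And>y. \<bar>curie_f \<alpha> J h (mu + y) - curie_f \<alpha> J h mu
                          - (\<Sum>i<2*k. taylor_term (curie_f \<alpha> J h) mu (Suc i) y)\<bar> \<le> C * norm y ^ Suc (2*k)"
    using curie_f_Taylor_remainder by blast
  then show ?thesis
    unfolding homogeneous_type_sum_taylor_term[OF assms] by blast
qed

section \<open>Homogeneous leading terms\<close>

lemma homogeneous_negative_le_norm_power:
  fixes T :: "'a::euclidean_space \<Rightarrow> real"
  assumes cont: "continuous_on UNIV T" and homog: "\<And>c y. T (c *\<^sub>R y) = c ^ m * T y"
    and neg: "\<And>y. y \<noteq> 0 \<Longrightarrow> T y < 0" and "0 < m"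
  shows "\<exists>c>0. \<forall>y. T y \<le> - c * norm y ^ m"
proof -
  have "sphere (0::'a) 1 \<noteq> {}"
    by simp
  then obtain y0 where y0: "y0 \<in> sphere 0 1" and max: "\<And>y. y \<in> sphere 0 1 \<Longrightarrow> T y \<le> T y0"
    using continuous_attains_sup[OF compact_sphere _ continuous_on_subset[OF cont]] by blast
  have "T y \<le> - (- T y0) * norm y ^ m" for y
  proof (cases "y = 0")
    case True
    then show ?thesis
      using homog[of 0 0] \<open>0 < m\<close> by (simp add: power_0_left)
  next
    case False
    have "T y = norm y ^ m * T (y /\<^sub>R norm y)"
      using homog[of "norm y" "y /\<^sub>R norm y"] False by simp
    also have "\<dots> \<le> norm y ^ m * T y0"
      using False by (intro mult_left_mono max) auto
    finally show ?thesis by (simp add: mult.commute)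
  qed
  moreover have "T y0 < 0"
    using y0 by (intro neg) auto
  ultimately show ?thesis
    by (intro exI[of _ "- T y0"]) auto
qed

lemma Taylor_leading_term_local_bound:
  fixes g T :: "'a::real_normed_vector \<Rightarrow> real"
  assumes remainder: "\<And>y. \<bar>g (mu + y) - g mu - T y\<bar> \<le> C * norm y ^ Suc m"
    and leading: "\<And>y. T y \<le> - c * norm y ^ m" and "0 < c"
  shows "\<exists>d>0. \<forall>y. norm y \<le> d \<longrightarrow> g (mu + y) - g mu \<le> - (c/2) * norm y ^ m"
proof -
  define d where "d = c / (2 * max C 1)"
  have "0 < d"
    using \<open>0 < c\<close> by (simp add: d_def)
  moreover have "g (mu + y) - g mu \<le> - (c/2) * norm y ^ m" if "norm y \<le> d" for y
  proof -
    have "C * norm y ^ Suc m \<le> max C 1 * (norm y * norm y ^ m)"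
      by (simp add: mult_right_mono)
    also have "\<dots> \<le> max C 1 * (d * norm y ^ m)"
      by (intro mult_left_mono mult_right_mono that) auto
    also have "\<dots> = (c/2) * norm y ^ m"
      by (simp add: d_def)
    finally show ?thesis
      using remainder[of y] leading[of y] by linarith
  qed
  ultimately show ?thesis
    by blast
qed

section \<open>Integrability of functions of rapid decay\<close>

lemma integrable_weighted_cube_series:
  fixes w :: "nat \<Rightarrow> real"
  defines "Q \<equiv> \<lambda>j. cbox (\<chi> i. - (real j + 1)) (\<chi> i. real j + 1) :: (real^'n) set"
  assumes w: "\<And>j. 0 \<le> w j" and sum: "summable (\<lambda>j. w j * (2 * (real j + 1)) ^ CARD('n))"
  shows "summable (\<lambda>j. if u \<in> Q j then w j else 0)"
    and "(\<lambda>u. \<Sum>j. if u \<in> Q j then w j else 0) integrable_on UNIV"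
proof -
  have measure_Q: "measure lborel (Q j) = (2 * (real j + 1)) ^ CARD('n)" for j
    by (simp add: Q_def content_cbox_cart prod_constant interval_eq_empty_cart)
  have "w j \<le> w j * (2 * (real j + 1)) ^ CARD('n)" for j
    using mult_left_mono[OF one_le_power[of "2 * (real j + 1)" "CARD('n)"] w[of j]] by simp
  then have sw: "summable w"
    by (intro summable_comparison_test[OF _ sum]) (auto simp: w)
  show su: "summable (\<lambda>j. if u \<in> Q j then w j else 0)" for u
    by (rule summable_comparison_test[OF _ sw]) (auto simp: w)
  define f where "f K u = (\<Sum>j<K. if u \<in> Q j then w j else 0)" for K u
  have int_Q: "((\<lambda>u. if u \<in> Q j then w j else 0) has_integral w j * (2 * (real j + 1)) ^ CARD('n)) UNIV"
    for j
  proof -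
    have "((\<lambda>u. w j) has_integral measure lborel (Q j) *\<^sub>R w j) (Q j)"
      unfolding Q_def by (rule has_integral_const)
    then show ?thesis
      unfolding has_integral_restrict_UNIV measure_Q by (simp add: mult.commute)
  qed
  have int1: "(\<lambda>u. if u \<in> Q j then w j else 0) integrable_on UNIV" for j
    using int_Q by (rule has_integral_integrable)
  have int1_eq: "integral UNIV (\<lambda>u. if u \<in> Q j then w j else 0) = w j * (2 * (real j + 1)) ^ CARD('n)" for j
    using int_Q by (rule integral_unique)
  have "(\<lambda>u. \<Sum>j. if u \<in> Q j then w j else 0) integrable_on UNIV \<and>
        ((\<lambda>K. integral UNIV (f K)) \<longlonglongrightarrow> integral UNIV (\<lambda>u. \<Sum>j. if u \<in> Q j then w j else 0))"
  proof (rule monotone_convergence_increasing)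
    show "f K integrable_on UNIV" for K
      unfolding f_def using int1 by (intro integrable_sum) blast+
    show "f K u \<le> f (Suc K) u" for K u
      by (simp add: f_def w)
    show "(\<lambda>K. f K u) \<longlonglongrightarrow> (\<Sum>j. if u \<in> Q j then w j else 0)" for u
      unfolding f_def using su summable_LIMSEQ by blast
    have "integral UNIV (f K) = (\<Sum>j<K. w j * (2 * (real j + 1)) ^ CARD('n))" for K
      unfolding f_def by (simp add: integral_sum int1 int1_eq del: has_integral_restrict_UNIV)
    moreover have "(\<Sum>j<K. w j * (2 * (real j + 1)) ^ CARD('n)) \<le> (\<Sum>j. w j * (2 * (real j + 1)) ^ CARD('n))"
      for K
      using sum by (rule sum_le_suminf) (auto simp: w)
    moreover have "0 \<le> (\<Sum>j<K. w j * (2 * (real j + 1)) ^ CARD('n))" for K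
      using w by (simp add: sum_nonneg)
    ultimately show "bounded (range (\<lambda>K. integral UNIV (f K)))"
      unfolding bounded_iff
      by (intro exI[of _ "\<Sum>j. w j * (2 * (real j + 1)) ^ CARD('n)"]) (auto simp del: of_nat_Suc)
  qed
  then show "(\<lambda>u. \<Sum>j. if u \<in> Q j then w j else 0) integrable_on UNIV"
    by blast
qed

text \<open>Dominated by the step function \<open>\<Sum>\<^sub>j (j+1)\<^bsup>-(n+2)\<^esup> 1\<^bsub>Q\<^sub>j\<^esub>\<close> over the cubes
  \<open>Q\<^sub>j = [-(j+1), j+1]\<^sup>n\<close>, whose integral \<open>\<Sum>\<^sub>j 2\<^sup>n (j+1)\<^sup>-\<^sup>2\<close> is finite.\<close>

lemma integrable_inverse_one_plus_norm_power:
  "(\<lambda>u::real^'n. 1 / (1 + norm u) ^ (CARD('n) + 2)) integrable_on UNIV"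
proof -
  let ?n = "CARD('n)"
  define w where "w j = 1 / (real j + 1) ^ (?n + 2)" for j
  have "summable (\<lambda>j. inverse ((real j + 1) ^ 2))"
    using summable_Suc_iff[where f = "\<lambda>j. inverse (real j ^ 2)", THEN iffD2, OF inverse_power_summable]
    by (simp add: add.commute)
  moreover have "w j * (2 * (real j + 1)) ^ ?n = 2 ^ ?n * inverse ((real j + 1) ^ 2)" for j
  proof -
    have "w j * (2 * (real j + 1)) ^ ?n = 2 ^ ?n * ((real j + 1) ^ ?n / (real j + 1) ^ (?n + 2))"
      unfolding w_def power_mult_distrib by simp
    also have "a ^ ?n / a ^ (?n + 2) = inverse (a ^ 2)" if "0 < a" for a :: real
      using that by (simp add: power_add field_simps power2_eq_square)
    finally show ?thesis
      by simp
  qed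
  ultimately have "summable (\<lambda>j. w j * (2 * (real j + 1)) ^ ?n)"
    using summable_mult[of _ "2 ^ ?n"] by simp
  note cubes = integrable_weighted_cube_series[of w, OF _ this]
  show ?thesis
  proof (rule integrable_on_all_intervals_UNIV[OF _ _ cubes(2)])
    show "(\<lambda>u::real^'n. 1 / (1 + norm u) ^ (?n + 2)) integrable_on cbox a b" for a b
      by (intro integrable_continuous continuous_intros) (auto simp: add_nonneg_eq_0_iff)
    fix u :: "real^'n"
    define j where "j = nat \<lfloor>norm u\<rfloor>"
    have "real j = real_of_int \<lfloor>norm u\<rfloor>"
      unfolding j_def by simp
    then have j: "real j \<le> norm u" "norm u < real j + 1"
      using floor_correct[of "norm u"] by linarith+
    have "u \<in> cbox (\<chi> i. - (real j + 1)) (\<chi> i. real j + 1)"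
      unfolding mem_box_cart
    proof
      fix i
      have "\<bar>u$i\<bar> \<le> norm u"
        by (rule component_le_norm_cart)
      then show "(\<chi> i. - (real j + 1)) $ i \<le> u $ i \<and> u $ i \<le> (\<chi> i. real j + 1) $ i"
        using j by (simp add: abs_le_iff)
    qed
    then have "w j = (\<Sum>m\<in>{j}. if u \<in> cbox (\<chi> i. - (real m + 1)) (\<chi> i. real m + 1) then w m else 0)"
      by simp
    also have "\<dots> \<le> (\<Sum>m. if u \<in> cbox (\<chi> i. - (real m + 1)) (\<chi> i. real m + 1) then w m else 0)"
      by (rule sum_le_suminf[OF cubes(1)]) (auto simp: w_def)
    finally have "w j \<le> (\<Sum>m. if u \<in> cbox (\<chi> i. - (real m + 1)) (\<chi> i. real m + 1) then w m else 0)" .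
    moreover have "1 / (1 + norm u) ^ (?n + 2) \<le> w j"
      unfolding w_def using j by (intro divide_left_mono power_mono) auto
    ultimately show "norm (1 / (1 + norm u) ^ (?n + 2))
                       \<le> (\<Sum>m. if u \<in> cbox (\<chi> i. - (real m + 1)) (\<chi> i. real m + 1) then w m else 0)"
      by simp
  qed (simp add: w_def)
qed

lemma exp_neg_power_le_inverse_power:
  assumes "0 < c" and "1 \<le> k" and "0 \<le> r"
  shows "exp (- c * r ^ (2*k) + b * r) \<le> exp (c + (b + real m)\<^sup>2 / (4 * c)) / (1 + r) ^ m"
proof -
  have "r\<^sup>2 - 1 \<le> r ^ (2*k)"
  proof (cases "1 \<le> r")
    case True
    then show ?thesis
      using power_increasing[of 2 "2*k" r] \<open>1 \<le> k\<close> by simp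
  next
    case False
    then have "r\<^sup>2 \<le> 1"
      using \<open>0 \<le> r\<close> by (intro power_le_one) auto
    moreover have "0 \<le> r ^ (2*k)"
      using \<open>0 \<le> r\<close> by simp
    ultimately show ?thesis
      by linarith
  qed
  then have "c * r\<^sup>2 - c \<le> c * r ^ (2*k)"
    using mult_left_mono[of "r\<^sup>2 - 1" "r ^ (2*k)" c] \<open>0 < c\<close> by (simp add: right_diff_distrib)
  moreover have "- c * r\<^sup>2 + (b + real m) * r \<le> (b + real m)\<^sup>2 / (4 * c)"
    \<comment> \<open>complete the square: \<open>0 \<le> (2 c r - (b + m))\<^sup>2\<close>\<close>
    using \<open>0 < c\<close> zero_le_power2[of "2 * c * r - (b + real m)"]
    by (simp add: field_simps power2_eq_square)
  ultimately have "- c * r ^ (2*k) + b * r + real m * r \<le> c + (b + real m)\<^sup>2 / (4 * c)"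
    by (simp add: algebra_simps)
  then have E: "exp (- c * r ^ (2*k) + b * r) * exp (real m * r) \<le> exp (c + (b + real m)\<^sup>2 / (4 * c))"
    by (simp add: exp_add[symmetric])
  have "(1 + r) ^ m \<le> exp (real m * r)"
    using power_mono[OF exp_ge_add_one_self[of r], of m] \<open>0 \<le> r\<close> by (simp add: exp_of_nat_mult add.commute)
  then have "exp (- c * r ^ (2*k) + b * r) * (1 + r) ^ m \<le> exp (c + (b + real m)\<^sup>2 / (4 * c))"
    using order_trans[OF mult_left_mono[OF _ exp_ge_zero] E] by blast
  then show ?thesis
    using \<open>0 \<le> r\<close> by (simp add: pos_le_divide_eq)
qed

lemma integrable_exp_neg_norm_power:
  fixes f :: "real^'n \<Rightarrow> real"
  assumes "continuous_on UNIV f" and "0 < c" and "1 \<le> k"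
    and bound: "\<And>u. \<bar>f u\<bar> \<le> B * exp (- c * norm u ^ (2*k) + b * norm u)"
  shows "f integrable_on UNIV"
proof (rule integrable_on_all_intervals_UNIV)
  let ?m = "CARD('n) + 2" and ?K = "exp (c + (b + real (CARD('n) + 2))\<^sup>2 / (4 * c))"
  show "f integrable_on cbox a b" for a b
    by (rule integrable_continuous[OF continuous_on_subset[OF assms(1)]]) simp
  show "(\<lambda>u::real^'n. B * ?K * (1 / (1 + norm u) ^ ?m)) integrable_on UNIV"
    using integrable_cmul[OF integrable_inverse_one_plus_norm_power, of "B * ?K"] by simp
  fix u :: "real^'n"
  have "0 \<le> B * exp (- c * norm u ^ (2*k) + b * norm u)"
    using bound[of u] by linarith
  then have "0 \<le> B"
    by (simp add: zero_le_mult_iff)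
  then have "\<bar>f u\<bar> \<le> B * (?K / (1 + norm u) ^ ?m)"
    using order_trans[OF bound mult_left_mono[OF exp_neg_power_le_inverse_power[OF \<open>0 < c\<close> \<open>1 \<le> k\<close> norm_ge_zero]]]
    by blast
  then show "norm (f u) \<le> B * ?K * (1 / (1 + norm u) ^ ?m)"
    by simp
qed

lemma dominated_convergence_at_top:
  fixes G :: "real \<Rightarrow> 'a::euclidean_space \<Rightarrow> real"
  assumes G: "\<And>N. 1 \<le> N \<Longrightarrow> G N integrable_on S" and h: "h integrable_on S"
    and le: "\<And>N x. 1 \<le> N \<Longrightarrow> x \<in> S \<Longrightarrow> norm (G N x) \<le> h x"
    and conv: "\<And>x. x \<in> S \<Longrightarrow> ((\<lambda>N. G N x) \<longlongrightarrow> L x) at_top"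
  shows "((\<lambda>N. integral S (G N)) \<longlongrightarrow> integral S L) at_top"
proof (rule tendsto_at_topI_sequentially)
  fix X :: "nat \<Rightarrow> real"
  assume X: "filterlim X at_top sequentially"
  define Y where "Y i = max 1 (X i)" for i
  have Y: "filterlim Y at_top sequentially"
    by (rule filterlim_at_top_mono[OF X]) (simp add: Y_def)
  have "(\<lambda>i. integral S (G (Y i))) \<longlonglongrightarrow> integral S L"
  proof (rule dominated_convergence(2)[OF G h le])
    show "(\<lambda>i. G (Y i) x) \<longlonglongrightarrow> L x" if "x \<in> S" for x
      using filterlim_compose[OF conv[OF that] Y] .
  qed (simp_all add: Y_def)
  moreover have "eventually (\<lambda>i. 1 \<le> X i) sequentially"
    using X by (simp add: filterlim_at_top)
  then have "eventually (\<lambda>i. integral S (G (Y i)) = integral S (G (X i))) sequentially"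
    by eventually_elim (simp add: Y_def)
  ultimately show "(\<lambda>i. integral S (G (X i))) \<longlonglongrightarrow> integral S L"
    by (rule Lim_transform_eventually)
qed

lemma ball_subset_cbox_cart: "ball (0::real^'n) r \<subseteq> cbox (\<chi> l. - r) (\<chi> l. r)"
proof
  fix z :: "real^'n"
  assume "z \<in> ball 0 r"
  then have z: "\<bar>z$l\<bar> < r" for l
    using component_le_norm_cart[of z l] by simp
  show "z \<in> cbox (\<chi> l. - r) (\<chi> l. r)"
    unfolding mem_box_cart
  proof
    fix l
    show "(\<chi> l. - r) $ l \<le> z $ l \<and> z $ l \<le> (\<chi> l. r) $ l"
      using z[of l] by (auto simp: abs_less_iff)
  qed
qed

lemma has_integral_ball_on_cbox_cart:
  fixes f :: "real^'n \<Rightarrow> real"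
  assumes cont: "continuous_on UNIV f"
  shows "((\<lambda>x. if x \<in> ball c r then f x else 0) has_integral integral (ball c r) f)
           (cbox ((\<chi> l. - r) + c) ((\<chi> l. r) + c))"
proof -
  let ?F = "\<lambda>x. if x \<in> ball c r then f x else 0" and ?Q = "cbox ((\<chi> l. - r) + c) ((\<chi> l. r) + c)"
  have ball_sub: "ball c r \<subseteq> ?Q"
  proof
    fix x
    assume "x \<in> ball c r"
    then have "x - c \<in> cbox (\<chi> l. - r) (\<chi> l. r)"
      using ball_subset_cbox_cart[of r] by (auto simp: dist_norm norm_minus_commute)
    then have "- r \<le> x$l - c$l \<and> x$l - c$l \<le> r" for l
      by (simp add: mem_box_cart)
    then show "x \<in> ?Q"
      unfolding mem_box_cart by (simp add: algebra_simps)
  qed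
  have "f absolutely_integrable_on ?Q"
    by (rule absolutely_integrable_continuous[OF continuous_on_subset[OF cont]]) simp
  then have "f absolutely_integrable_on ball c r"
    by (rule set_integrable_subset) (use ball_sub in \<open>auto intro: fmeasurableD\<close>)
  then have "(?F has_integral integral (ball c r) f) UNIV"
    unfolding has_integral_restrict_UNIV by (intro integrable_integral set_lebesgue_integral_eq_integral(1))
  moreover have "(\<lambda>x. if x \<in> ?Q then ?F x else 0) = ?F"
    using ball_sub by (auto simp: fun_eq_iff)
  ultimately show ?thesis
    using has_integral_restrict_UNIV[of ?Q ?F] by simp
qed

lemma has_integral_ball_stretch:
  fixes f :: "real^'n \<Rightarrow> real" and \<nu> :: "'n \<Rightarrow> real"
  assumes cont: "continuous_on UNIV f" and \<nu>: "\<And>l. 0 < \<nu> l"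
  shows "((\<lambda>u. if mu + (\<chi> l. u$l / \<nu> l) \<in> ball mu \<delta> then f (mu + (\<chi> l. u$l / \<nu> l)) else 0)
           has_integral prod \<nu> UNIV * integral (ball mu \<delta>) f) UNIV"
proof -
  define F where "F x = (if x \<in> ball mu \<delta> then f x else 0)" for x
  let ?I = "integral (ball mu \<delta>) f" and ?Q = "cbox (\<chi> l. - \<delta>) (\<chi> l. \<delta>) :: (real^'n) set"
  have "((F \<circ> (+) mu) has_integral ?I) ?Q"
    unfolding has_integral_shift_cbox_iff F_def[abs_def] by (rule has_integral_ball_on_cbox_cart[OF cont])
  from has_integral_stretch_cart[OF this, of "\<lambda>l. 1 / \<nu> l"] \<nu>
  have stretched: "((\<lambda>u. F (mu + (\<chi> l. u$l / \<nu> l))) has_integral prod \<nu> UNIV * ?I)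
                     ((\<lambda>x. \<chi> l. x$l * \<nu> l) ` ?Q)"
    by (simp add: prod_dividef less_imp_neq[symmetric] abs_prod prod_pos less_imp_le)
  show ?thesis
  proof (rule has_integral_on_superset[OF stretched[unfolded F_def]])
    fix u
    assume u: "u \<notin> (\<lambda>x. \<chi> l. x$l * \<nu> l) ` ?Q"
    show "(if mu + (\<chi> l. u$l / \<nu> l) \<in> ball mu \<delta> then f (mu + (\<chi> l. u$l / \<nu> l)) else 0) = 0"
    proof (rule ccontr)
      assume "(if mu + (\<chi> l. u$l / \<nu> l) \<in> ball mu \<delta> then f (mu + (\<chi> l. u$l / \<nu> l)) else 0) \<noteq> 0"
      then have "(\<chi> l. u$l / \<nu> l) \<in> ?Q"
        using ball_subset_cbox_cart[of \<delta>] by (auto simp: dist_norm split: if_splits)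
      moreover have "u = (\<lambda>x. \<chi> l. x$l * \<nu> l) (\<chi> l. u$l / \<nu> l)"
        using \<nu> by (simp add: vec_eq_iff less_imp_neq[symmetric])
      ultimately show False
        using u by blast
    qed
  qed simp
qed

section \<open>Laplace's method at a maximum of homogeneous type\<close>

locale laplace_maximum =
  fixes g T :: "real^'n \<Rightarrow> real" and mu \<alpha> :: "real^'n" and k :: nat
  assumes k: "1 \<le> k"
    and alpha: "\<And>l. 0 < \<alpha>$l \<and> \<alpha>$l \<le> 1"
    and continuous_g: "continuous_on UNIV g"
    and continuous_T: "continuous_on UNIV T"
    and homogeneous_T: "\<And>c y. T (c *\<^sub>R y) = c ^ (2*k) * T y"
    and negative_T: "\<And>y. y \<noteq> 0 \<Longrightarrow> T y < 0"
    and remainder: "\<exists>C. \<forall>y. \<bar>g (mu + y) - g mu - T y\<bar> \<le> C * norm y ^ Suc (2*k)"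
begin

definition rate :: real where "rate = 1 / (2 * real k)"

definition stretch :: "real^'n \<Rightarrow> real^'n" where
  "stretch u = (\<chi> l. u$l / \<alpha>$l powr rate)"

text \<open>The substitution \<open>x = \<mu> + (u\<^sub>l / N\<^sub>l\<^bsup>1/(2k)\<^esup>)\<^sub>l\<close> with \<open>N\<^sub>l = \<alpha>\<^sub>l N\<close>.\<close>

definition zoom :: "real \<Rightarrow> real^'n \<Rightarrow> real^'n" where
  "zoom N u = mu + N powr (- rate) *\<^sub>R stretch u"

definition rescaled :: "real^'n \<Rightarrow> real \<Rightarrow> (real^'n \<Rightarrow> real) \<Rightarrow> real \<Rightarrow> real^'n \<Rightarrow> real" where
  "rescaled t \<delta> \<phi> N u =
     (if zoom N u \<in> ball mu \<delta> then exp (N * (g (zoom N u) - g mu) + t \<bullet> u) * \<phi> (zoom N u) else 0)"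

lemma rate_pos: "0 < rate"
  using k by (simp add: rate_def)

lemma powr_neg_rate_power:
  assumes "0 < N"
  shows "(N powr (- rate)) ^ (2*k) = 1 / N"
proof -
  have "(N powr (- rate)) ^ (2*k) = N powr (real (2*k) * (- rate))"
    using assms by (intro powr_power) simp
  also have "real (2*k) * (- rate) = -1"
    using k by (simp add: rate_def)
  finally show ?thesis
    using assms by (simp add: powr_minus divide_inverse)
qed

lemma zoom_eq:
  assumes "0 < N"
  shows "zoom N u = mu + (\<chi> l. u$l / (\<alpha>$l * N) powr rate)"
proof -
  have "(\<chi> l. u$l / (\<alpha>$l * N) powr rate) = N powr (- rate) *\<^sub>R stretch u"
    using assms alpha by (simp add: stretch_def vec_eq_iff powr_mult powr_minus field_simps)
  then show ?thesis
    by (simp add: zoom_def)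
qed

lemma norm_le_norm_stretch: "norm u \<le> norm (stretch u)"
proof (rule norm_le_componentwise_cart)
  fix l
  have "\<alpha>$l powr rate \<le> 1" and "0 < \<alpha>$l powr rate"
    using alpha[of l] rate_pos powr_mono2[of rate "\<alpha>$l" 1] by auto
  moreover have "\<bar>u$l\<bar> * \<alpha>$l powr rate \<le> \<bar>u$l\<bar>"
    using \<open>\<alpha>$l powr rate \<le> 1\<close> by (simp add: mult_left_le)
  ultimately show "norm (u$l) \<le> norm (stretch u $ l)"
    by (simp add: stretch_def abs_divide le_divide_eq)
qed

lemma continuous_on_stretch: "continuous_on UNIV stretch"
  unfolding stretch_def[abs_def] using alpha by (intro continuous_intros) (auto simp: less_imp_neq[symmetric])

lemma T_le_neg_norm_power: "\<exists>c>0. \<forall>y. T y \<le> - c * norm y ^ (2*k)"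
proof -
  have "0 < 2*k"
    using k by simp
  then show ?thesis
    by (intro homogeneous_negative_le_norm_power continuous_T homogeneous_T negative_T)
qed

lemma integrable_limit_integrand: "(\<lambda>u. exp (T (stretch u) + t \<bullet> u)) integrable_on UNIV"
proof -
  obtain c where c: "0 < c" "\<And>y. T y \<le> - c * norm y ^ (2*k)"
    using T_le_neg_norm_power by blast
  have "continuous_on UNIV (\<lambda>u. T (stretch u))"
    using continuous_on_compose2[OF continuous_T continuous_on_stretch] by simp
  then show ?thesis
  proof (intro integrable_exp_neg_norm_power[OF _ \<open>0 < c\<close> k] continuous_intros)
    fix u
    have "c * norm u ^ (2*k) \<le> c * norm (stretch u) ^ (2*k)"
      using \<open>0 < c\<close> by (intro mult_left_mono power_mono norm_le_norm_stretch) auto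
    then have "T (stretch u) \<le> - c * norm u ^ (2*k)"
      using c(2)[of "stretch u"] by linarith
    then show "\<bar>exp (T (stretch u) + t \<bullet> u)\<bar> \<le> 1 * exp (- c * norm u ^ (2*k) + norm t * norm u)"
      using norm_cauchy_schwarz[of t u] by simp
  qed
qed

lemma has_integral_rescaled:
  assumes "0 < N" and "continuous_on UNIV \<phi>"
  shows "(rescaled t \<delta> \<phi> N has_integral
            exp (- (\<Sum>l\<in>UNIV. t$l * (\<alpha>$l * N) powr rate * mu$l)) * (\<Prod>l\<in>UNIV. \<alpha>$l * N) powr rate
            * exp (- N * g mu)
            * integral (ball mu \<delta>)
                (\<lambda>x. exp (N * g x + (\<Sum>l\<in>UNIV. t$l * (\<alpha>$l * N) powr rate * x$l)) * \<phi> x)) UNIV"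
proof -
  \<comment> \<open>The Jacobian is \<open>\<Prod> \<nu>\<^sub>l\<close>, and \<open>\<Sum> t\<^sub>l \<nu>\<^sub>l x\<^sub>l\<close> splits into the constant \<open>S\<close> and \<open>\<langle>t, u\<rangle>\<close>.\<close>
  define \<nu> where "\<nu> l = (\<alpha>$l * N) powr rate" for l
  define H where "H x = exp (N * g x + (\<Sum>l\<in>UNIV. t$l * \<nu> l * x$l)) * \<phi> x" for x
  define S where "S = (\<Sum>l\<in>UNIV. t$l * \<nu> l * mu$l)"
  have \<nu>: "0 < \<nu> l" for l
    using alpha[of l] assms(1) by (simp add: \<nu>_def)
  have zoom: "zoom N u = mu + (\<chi> l. u$l / \<nu> l)" for u
    using zoom_eq[OF assms(1)] by (simp add: \<nu>_def)
  have "continuous_on UNIV H"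
    unfolding H_def by (intro continuous_intros continuous_g assms(2))
  from has_integral_mult_right[OF has_integral_ball_stretch[OF this \<nu>], of "exp (- S) * exp (- N * g mu)"]
  have "((\<lambda>u. exp (- S) * exp (- N * g mu) * (if zoom N u \<in> ball mu \<delta> then H (zoom N u) else 0))
          has_integral exp (- S) * exp (- N * g mu) * (prod \<nu> UNIV * integral (ball mu \<delta>) H)) UNIV"
    unfolding zoom .
  moreover have "(\<lambda>u. exp (- S) * exp (- N * g mu) * (if zoom N u \<in> ball mu \<delta> then H (zoom N u) else 0))
                   = rescaled t \<delta> \<phi> N"
  proof
    fix u
    have "t$l * \<nu> l * zoom N u $ l = t$l * \<nu> l * mu$l + t$l * u$l" for l
      using \<nu>[of l] by (simp add: zoom algebra_simps)
    then have "(\<Sum>l\<in>UNIV. t$l * \<nu> l * zoom N u $ l) = S + t \<bullet> u"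
      by (simp add: S_def inner_vec_def inner_real_def sum.distrib)
    then have "exp (- S) * exp (- N * g mu) * H (zoom N u)
                 = exp (N * (g (zoom N u) - g mu) + t \<bullet> u) * \<phi> (zoom N u)"
      by (simp add: H_def mult_exp_exp algebra_simps)
    then show "exp (- S) * exp (- N * g mu) * (if zoom N u \<in> ball mu \<delta> then H (zoom N u) else 0)
                 = rescaled t \<delta> \<phi> N u"
      by (simp add: rescaled_def)
  qed
  moreover have "prod \<nu> UNIV = (\<Prod>l\<in>UNIV. \<alpha>$l * N) powr rate"
    using alpha assms(1) by (simp add: \<nu>_def prod_powr_distrib less_imp_le)
  ultimately show ?thesis
    unfolding S_def H_def[abs_def] \<nu>_def by (simp only: mult_ac)
qed

lemma scaled_increment_tendsto: "((\<lambda>N. N * (g (zoom N u) - g mu)) \<longlongrightarrow> T (stretch u)) at_top"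
proof -
  obtain C where C: "\<And>y. \<bar>g (mu + y) - g mu - T y\<bar> \<le> C * norm y ^ Suc (2*k)"
    using remainder by blast
  let ?w = "stretch u"
  have "((\<lambda>N. N powr (- rate)) \<longlongrightarrow> 0) at_top"
    using rate_pos by (intro tendsto_neg_powr filterlim_ident) simp
  then have bound_lim: "((\<lambda>N. C * norm ?w ^ Suc (2*k) * N powr (- rate)) \<longlongrightarrow> 0) at_top"
    by (rule tendsto_mult_right_zero)
  have "eventually (\<lambda>N. norm (N * (g (zoom N u) - g mu) - T ?w)
                                  \<le> C * norm ?w ^ Suc (2*k) * N powr (- rate)) at_top"
    using eventually_gt_at_top[of 0]
  proof eventually_elim
    case (elim N)
    let ?s = "N powr (- rate)"
    have Ns: "N * ?s ^ (2*k) = 1"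
      using powr_neg_rate_power[OF elim] elim by simp
    have "N * (g (zoom N u) - g mu) - T ?w = N * (g (mu + ?s *\<^sub>R ?w) - g mu - T (?s *\<^sub>R ?w))"
      unfolding zoom_def homogeneous_T right_diff_distrib mult.assoc[symmetric] Ns by simp
    also have "norm \<dots> \<le> N * (C * norm (?s *\<^sub>R ?w) ^ Suc (2*k))"
      unfolding real_norm_def abs_mult using C[of "?s *\<^sub>R ?w"] elim by (intro mult_mono) auto
    also have "\<dots> = C * norm ?w ^ Suc (2*k) * ?s * (N * ?s ^ (2*k))"
      unfolding norm_scaleR abs_of_nonneg[OF powr_ge_zero] power_mult_distrib power_Suc by (simp only: mult_ac)
    finally show ?case
      unfolding Ns by simp
  qed
  from Lim_null_comparison[OF this bound_lim] show ?thesis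
    by (rule LIM_zero_cancel)
qed

lemma rescaled_tendsto:
  assumes "0 < \<delta>" and "continuous_on UNIV \<phi>"
  shows "((\<lambda>N. rescaled t \<delta> \<phi> N u) \<longlongrightarrow> \<phi> mu * exp (T (stretch u) + t \<bullet> u)) at_top"
proof -
  have "((\<lambda>N. N powr (- rate)) \<longlongrightarrow> 0) at_top"
    using rate_pos by (intro tendsto_neg_powr filterlim_ident) simp
  then have "((\<lambda>N. mu + N powr (- rate) *\<^sub>R stretch u) \<longlongrightarrow> mu + 0 *\<^sub>R stretch u) at_top"
    by (intro tendsto_intros)
  then have zoom: "((\<lambda>N. zoom N u) \<longlongrightarrow> mu) at_top"
    by (simp add: zoom_def)
  have "isCont \<phi> mu"
    using assms(2) by (simp add: continuous_on_eq_continuous_at)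
  from isCont_tendsto_compose[OF this zoom] scaled_increment_tendsto
  have "((\<lambda>N. \<phi> (zoom N u) * exp (N * (g (zoom N u) - g mu) + t \<bullet> u))
          \<longlongrightarrow> \<phi> mu * exp (T (stretch u) + t \<bullet> u)) at_top"
    by (intro tendsto_mult tendsto_exp tendsto_add tendsto_const)
  moreover have "eventually (\<lambda>N. zoom N u \<in> ball mu \<delta>) at_top"
    using tendstoD[OF zoom assms(1)] by eventually_elim (simp add: dist_commute)
  then have "eventually (\<lambda>N. \<phi> (zoom N u) * exp (N * (g (zoom N u) - g mu) + t \<bullet> u)
                              = rescaled t \<delta> \<phi> N u) at_top"
    by eventually_elim (simp add: rescaled_def)
  ultimately show ?thesis
    by (rule Lim_transform_eventually)
qed

lemma rescaled_dominated:
  assumes local: "\<And>y. norm y \<le> \<delta> \<Longrightarrow> g (mu + y) - g mu \<le> - c * norm y ^ (2*k)" and "0 \<le> c"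
    and bound: "\<And>x. \<bar>\<phi> x\<bar> \<le> B" and "1 \<le> N"
  shows "\<bar>rescaled t \<delta> \<phi> N u\<bar> \<le> B * exp (- c * norm u ^ (2*k) + norm t * norm u)"
proof (cases "zoom N u \<in> ball mu \<delta>")
  case False
  then show ?thesis
    using bound[of mu] by (simp add: rescaled_def)
next
  case True
  let ?y = "N powr (- rate) *\<^sub>R stretch u"
  have N: "0 < N"
    using \<open>1 \<le> N\<close> by simp
  have "norm ?y \<le> \<delta>"
    using True by (simp add: zoom_def dist_norm)
  then have "N * (g (zoom N u) - g mu) \<le> N * (- c * norm ?y ^ (2*k))"
    using N unfolding zoom_def by (intro mult_left_mono local) auto
  also have "\<dots> = - c * (N * norm ?y ^ (2*k))"
    by (simp only: mult_ac)
  also have "N * norm ?y ^ (2*k) = norm (stretch u) ^ (2*k)"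
    using powr_neg_rate_power[OF N] N by (simp add: power_mult_distrib)
  also have "- c * norm (stretch u) ^ (2*k) \<le> - c * norm u ^ (2*k)"
    using \<open>0 \<le> c\<close> by (intro mult_left_mono_neg power_mono norm_le_norm_stretch) auto
  finally have "N * (g (zoom N u) - g mu) + t \<bullet> u \<le> - c * norm u ^ (2*k) + norm t * norm u"
    using norm_cauchy_schwarz[of t u] by linarith
  then have "exp (N * (g (zoom N u) - g mu) + t \<bullet> u) * \<bar>\<phi> (zoom N u)\<bar>
               \<le> exp (- c * norm u ^ (2*k) + norm t * norm u) * B"
    using bound by (intro mult_mono) auto
  then show ?thesis
    using True by (simp add: rescaled_def abs_mult mult.commute)
qed

lemma local_decay: "\<exists>d>0. \<exists>c>0. \<forall>y. norm y \<le> d \<longrightarrow> g (mu + y) - g mu \<le> - c * norm y ^ (2*k)"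
proof -
  obtain c where "0 < c" and "\<forall>y. T y \<le> - c * norm y ^ (2*k)"
    using T_le_neg_norm_power by blast
  moreover obtain C where "\<forall>y. \<bar>g (mu + y) - g mu - T y\<bar> \<le> C * norm y ^ Suc (2*k)"
    using remainder by blast
  ultimately have "\<exists>d>0. \<forall>y. norm y \<le> d \<longrightarrow> g (mu + y) - g mu \<le> - (c/2) * norm y ^ (2*k)"
    by (intro Taylor_leading_term_local_bound) auto
  then show ?thesis
    using \<open>0 < c\<close> half_gt_zero by blast
qed

lemma integral_rescaled_tendsto:
  assumes local: "\<And>y. norm y \<le> \<delta> \<Longrightarrow> g (mu + y) - g mu \<le> - c * norm y ^ (2*k)"
    and "0 < c" and "0 < \<delta>" and \<phi>: "continuous_on UNIV \<phi>" and B: "\<And>x. \<bar>\<phi> x\<bar> \<le> B"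
  shows "((\<lambda>N. integral UNIV (rescaled t \<delta> \<phi> N))
            \<longlongrightarrow> \<phi> mu * integral UNIV (\<lambda>u. exp (T (stretch u) + t \<bullet> u))) at_top"
  unfolding integral_mult_right[symmetric]
proof (rule dominated_convergence_at_top)
  let ?h = "\<lambda>u::real^'n. B * exp (- c * norm u ^ (2*k) + norm t * norm u)"
  show "rescaled t \<delta> \<phi> N integrable_on UNIV" if "1 \<le> N" for N
    using that has_integral_integrable[OF has_integral_rescaled[OF _ \<phi>]] by simp
  have "0 \<le> B"
    using B[of mu] abs_ge_zero[of "\<phi> mu"] by linarith
  then have "\<bar>?h u\<bar> \<le> ?h u" for u
    by (simp add: abs_mult)
  moreover have "continuous_on UNIV ?h"
    by (intro continuous_intros)
  ultimately show "?h integrable_on UNIV"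
    using integrable_exp_neg_norm_power[OF _ \<open>0 < c\<close> k] by blast
  show "norm (rescaled t \<delta> \<phi> N u) \<le> ?h u" if "1 \<le> N" for N u
    using rescaled_dominated[OF local _ B that] \<open>0 < c\<close> by simp
  show "((\<lambda>N. rescaled t \<delta> \<phi> N u) \<longlongrightarrow> \<phi> mu * exp (T (stretch u) + t \<bullet> u)) at_top" for u
    by (rule rescaled_tendsto[OF \<open>0 < \<delta>\<close> \<phi>])
qed

lemma laplace_limit:
  "\<exists>\<delta>\<mu>>0. \<forall>(t::real^'n) \<delta> (\<phi>::real^'n \<Rightarrow> real).
     0 < \<delta> \<and> \<delta> \<le> \<delta>\<mu> \<and> continuous_on UNIV \<phi> \<and> bounded (range \<phi>) \<longrightarrow>
     (\<lambda>x. exp (T (stretch x) + t \<bullet> x)) integrable_on UNIV \<and>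
     ((\<lambda>N. exp (- (\<Sum>l\<in>UNIV. t$l * (\<alpha>$l * N) powr rate * mu$l)) * (\<Prod>l\<in>UNIV. \<alpha>$l * N) powr rate
            * exp (- N * g mu)
            * integral (ball mu \<delta>)
                (\<lambda>x. exp (N * g x + (\<Sum>l\<in>UNIV. t$l * (\<alpha>$l * N) powr rate * x$l)) * \<phi> x))
      \<longlongrightarrow> \<phi> mu * integral UNIV (\<lambda>x. exp (T (stretch x) + t \<bullet> x))) at_top"
proof -
  obtain d c where "0 < d" "0 < c"
    and local: "\<And>y. norm y \<le> d \<Longrightarrow> g (mu + y) - g mu \<le> - c * norm y ^ (2*k)"
    using local_decay by blast
  show ?thesis
  proof (intro exI[of _ d] conjI allI impI \<open>0 < d\<close> integrable_limit_integrand)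
    fix t :: "real^'n" and \<delta> :: real and \<phi> :: "real^'n \<Rightarrow> real"
    assume "0 < \<delta> \<and> \<delta> \<le> d \<and> continuous_on UNIV \<phi> \<and> bounded (range \<phi>)"
    then have "0 < \<delta>" "\<delta> \<le> d" "continuous_on UNIV \<phi>" "bounded (range \<phi>)"
      by auto
    then obtain B where "\<And>x. \<bar>\<phi> x\<bar> \<le> B"
      unfolding bounded_iff by auto
    with local \<open>\<delta> \<le> d\<close> \<open>0 < c\<close> \<open>0 < \<delta>\<close> \<open>continuous_on UNIV \<phi>\<close>
    have "((\<lambda>N. integral UNIV (rescaled t \<delta> \<phi> N))
            \<longlongrightarrow> \<phi> mu * integral UNIV (\<lambda>u. exp (T (stretch u) + t \<bullet> u))) at_top"
      by (intro integral_rescaled_tendsto) auto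
    moreover have "eventually (\<lambda>N. integral UNIV (rescaled t \<delta> \<phi> N) =
        exp (- (\<Sum>l\<in>UNIV. t$l * (\<alpha>$l * N) powr rate * mu$l)) * (\<Prod>l\<in>UNIV. \<alpha>$l * N) powr rate
        * exp (- N * g mu)
        * integral (ball mu \<delta>)
            (\<lambda>x. exp (N * g x + (\<Sum>l\<in>UNIV. t$l * (\<alpha>$l * N) powr rate * x$l)) * \<phi> x)) at_top"
      using eventually_gt_at_top[of 0]
      by eventually_elim (rule integral_unique[OF has_integral_rescaled[OF _ \<open>continuous_on UNIV \<phi>\<close>]])
    ultimately show "((\<lambda>N. exp (- (\<Sum>l\<in>UNIV. t$l * (\<alpha>$l * N) powr rate * mu$l))
            * (\<Prod>l\<in>UNIV. \<alpha>$l * N) powr rate * exp (- N * g mu)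
            * integral (ball mu \<delta>)
                (\<lambda>x. exp (N * g x + (\<Sum>l\<in>UNIV. t$l * (\<alpha>$l * N) powr rate * x$l)) * \<phi> x))
      \<longlongrightarrow> \<phi> mu * integral UNIV (\<lambda>x. exp (T (stretch x) + t \<bullet> x))) at_top"
      by (rule Lim_transform_eventually)
  qed
qed

end

theorem mainTheorem17:
  fixes \<alpha> :: "real^'n" and J :: "real^'n^'n" and h :: "real^'n" and mu :: "real^'n" and k :: nat
  assumes alpha_pos: "\<forall>l. 0 < \<alpha>$l \<and> \<alpha>$l < 1"
    and alpha_sum: "(\<Sum>l\<in>UNIV. \<alpha>$l) = 1"
    and J_sym: "transpose J = J"
    and J_diag: "\<forall>l. J$l$l > 0"
    and J_pd: "pos_def_matrix J"
    and mu_max: "\<forall>x. curie_f \<alpha> J h x \<le> curie_f \<alpha> J h mu"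
    and mu_type: "homogeneous_type (curie_f \<alpha> J h) mu k"
  shows "\<exists>\<delta>\<mu>>0. \<forall>(t::real^'n) \<delta> (\<phi>::real^'n \<Rightarrow> real).
           0 < \<delta> \<and> \<delta> \<le> \<delta>\<mu> \<and> continuous_on UNIV \<phi> \<and> bounded (range \<phi>) \<longrightarrow>
           (\<lambda>x. exp (taylor_term (curie_f \<alpha> J h) mu (2*k)
                         (\<chi> l. x$l / (\<alpha>$l powr (1 / (2 * real k)))) + t \<bullet> x))
             integrable_on UNIV \<and>
           ((\<lambda>N::real.
               exp (- (\<Sum>l\<in>UNIV. t$l * (\<alpha>$l * N) powr (1 / (2 * real k)) * mu$l))
               * (\<Prod>l\<in>UNIV. \<alpha>$l * N) powr (1 / (2 * real k))
               * exp (- N * curie_f \<alpha> J h mu)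
               * integral (ball mu \<delta>)
                   (\<lambda>x. exp (N * curie_f \<alpha> J h x
                             + (\<Sum>l\<in>UNIV. t$l * (\<alpha>$l * N) powr (1 / (2 * real k)) * x$l))
                        * \<phi> x))
            \<longlongrightarrow> \<phi> mu * integral UNIV
                 (\<lambda>x. exp (taylor_term (curie_f \<alpha> J h) mu (2*k)
                         (\<chi> l. x$l / (\<alpha>$l powr (1 / (2 * real k)))) + t \<bullet> x))) at_top"
proof -
  \<comment> \<open>Only \<open>0 < \<alpha>\<^sub>l \<le> 1\<close> and the homogeneous type of \<open>\<mu>\<close> are used: the integral is taken over a
     small ball, so neither the conditions on \<open>J\<close> and \<open>\<Sum> \<alpha>\<^sub>l\<close> nor global maximality matter.\<close>
  have k: "1 \<le> k"
    using mu_type by (simp add: homogeneous_type_def)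
  interpret laplace_maximum "curie_f \<alpha> J h" "taylor_term (curie_f \<alpha> J h) mu (2*k)" mu \<alpha> k
  proof
    show "0 < \<alpha>$l \<and> \<alpha>$l \<le> 1" for l
      using alpha_pos by (simp add: less_imp_le)
    show "y \<noteq> 0 \<Longrightarrow> taylor_term (curie_f \<alpha> J h) mu (2*k) y < 0" for y
      using mu_type by (simp add: homogeneous_type_def)
  qed (fact k continuous_on_curie_f continuous_on_taylor_term_curie_f[OF k]
         taylor_term_curie_f_homogeneous[OF k] curie_f_leading_term_remainder[OF mu_type])+
  show ?thesis
    using laplace_limit unfolding stretch_def rate_def .
qed

end
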